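(* Let $p$ be a prime, $k\ge2$, $\varphi\in\mathbb{Z}[x]$ monic and irreducible modulo $p$, $e\ge1$ an integer, $f\in\mathbb{Z}[x]$ with $f\equiv\varphi^e+p\,l\bmod p^k$ for some $l\in\mathbb{Z}[x]$, and $a$ a positive integer with $a\le e/2$. Let $E(y)=f(x)\left(\varphi^{a(k-1)}+\varphi^{a(k-2)}(py)+\cdots+\varphi^a(py)^{k-2}+(py)^{k-1}\right)$ and $R=\mathbb{Z}[x]/\langle p^k,\varphi^{ak}\rangle$. Suppose $y=y_0+py_1+p^2y_2+\cdots+p^{k-1}y_{k-1}\in R$ is a root of $E$ in $R$, where $y_0,\dots,y_{k-1}\in\mathbb{Z}[x]$. Then for every $z\in R$, the element $y_0+py_1+\cdots+p^{k-3}y_{k-3}+p^{k-2}z$ is also a root of $E$ in $R$.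
   Context: A root of $E$ in $R$ is an element $y\in R$ with $E(y)=0$ in $R$, i.e.\ $E(y)\equiv0\bmod\langle p^k,\varphi^{ak}\rangle$. For $k=2$ the sum $y_0+\cdots+p^{k-3}y_{k-3}$ is empty. *)

theory Defs
  imports "HOL-Computational_Algebra.Polynomial" "Berlekamp_Zassenhaus.Poly_Mod"
begin

definition E_poly :: "int \<Rightarrow> nat \<Rightarrow> int poly \<Rightarrow> nat \<Rightarrow> int poly \<Rightarrow> int poly \<Rightarrow> int poly" where
  "E_poly p k \<phi> a f y = f * (\<Sum>i<k. \<phi> ^ (a * (k - 1 - i)) * (smult p y) ^ i)"

definition in_ideal_pk_phi :: "int \<Rightarrow> nat \<Rightarrow> int poly \<Rightarrow> nat \<Rightarrow> int poly \<Rightarrow> bool" where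
  "in_ideal_pk_phi p k \<phi> a g \<longleftrightarrow> (\<exists>u v. g = smult (p ^ k) u + \<phi> ^ (a * k) * v)"

definition is_root_R :: "int \<Rightarrow> nat \<Rightarrow> int poly \<Rightarrow> nat \<Rightarrow> int poly \<Rightarrow> int poly \<Rightarrow> bool" where
  "is_root_R p k \<phi> a f y \<longleftrightarrow> in_ideal_pk_phi p k \<phi> a (E_poly p k \<phi> a f y)"

end

theory Submission
  imports Defs
begin

text \<open>Perturb \<open>y\<close> by \<open>d = p\<^bsup>k-2\<^esup>w\<close>. In the \<open>i\<close>-th summand of \<open>E\<close> the factor
  \<open>(p(y+d))\<^sup>i - (py)\<^sup>i\<close> is divisible by \<open>p\<^sup>i d\<close>, so every summand with \<open>i \<ge> 2\<close> lies in
  \<open>p\<^sup>k\<close>. The only surviving summand, \<open>i = 1\<close>, is \<open>f \<phi>\<^bsup>a(k-2)\<^esup> p\<^bsup>k-1\<^esup> w\<close>; as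
  \<open>f \<equiv> \<phi>\<^sup>e (mod p)\<close> and \<open>e \<ge> 2a\<close> it is congruent mod \<open>p\<^sup>k\<close> to a multiple of
  \<open>\<phi>\<^bsup>e+a(k-2)\<^esup>\<close>, hence of \<open>\<phi>\<^bsup>ak\<^esup>\<close>. So \<open>E(y + p\<^bsup>k-2\<^esup>w) \<equiv> E(y)\<close> in \<open>R\<close> for all
  \<open>y, w\<close>, and the digits \<open>y\<^bsub>k-2\<^esub>, y\<^bsub>k-1\<^esub>\<close> of a root may be replaced arbitrarily.\<close>

lemma (in poly_mod) Mp_eq_imp_eq_add_smult:
  assumes "Mp f = Mp g"
  shows "\<exists>h. f = g + smult m h"
proof
  have "f = Mp g + smult m (Dp f)" using Dp_Mp_eq[of f] assms by simp
  also have "\<dots> = g + smult m (Dp f - Dp g)" using Dp_Mp_eq[of g] by (simp add: smult_diff_right)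
  finally show "f = g + smult m (Dp f - Dp g)" .
qed

lemma in_ideal_pk_phi_smult_pk: "in_ideal_pk_phi p k \<phi> a (smult (p ^ k) u)"
  unfolding in_ideal_pk_phi_def by (rule exI[of _ u], rule exI[of _ 0]) simp

lemma in_ideal_pk_phi_phi_pow: "in_ideal_pk_phi p k \<phi> a (\<phi> ^ (a * k) * v)"
  unfolding in_ideal_pk_phi_def by (rule exI[of _ 0], rule exI[of _ v]) simp

lemma in_ideal_pk_phi_zero: "in_ideal_pk_phi p k \<phi> a 0"
  using in_ideal_pk_phi_smult_pk[of p k \<phi> a 0] by simp

lemma in_ideal_pk_phi_add:
  assumes "in_ideal_pk_phi p k \<phi> a g" and "in_ideal_pk_phi p k \<phi> a h"
  shows "in_ideal_pk_phi p k \<phi> a (g + h)"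
proof -
  from assms obtain u v u' v' where "g = smult (p ^ k) u + \<phi> ^ (a * k) * v"
    and "h = smult (p ^ k) u' + \<phi> ^ (a * k) * v'"
    unfolding in_ideal_pk_phi_def by blast
  then have "g + h = smult (p ^ k) (u + u') + \<phi> ^ (a * k) * (v + v')"
    by (simp add: algebra_simps smult_add_right)
  then show ?thesis unfolding in_ideal_pk_phi_def by blast
qed

lemma in_ideal_pk_phi_diff:
  assumes "in_ideal_pk_phi p k \<phi> a g" and "in_ideal_pk_phi p k \<phi> a h"
  shows "in_ideal_pk_phi p k \<phi> a (g - h)"
proof -
  from assms obtain u v u' v' where "g = smult (p ^ k) u + \<phi> ^ (a * k) * v"
    and "h = smult (p ^ k) u' + \<phi> ^ (a * k) * v'"
    unfolding in_ideal_pk_phi_def by blast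
  then have "g - h = smult (p ^ k) (u - u') + \<phi> ^ (a * k) * (v - v')"
    by (simp add: algebra_simps smult_diff_right)
  then show ?thesis unfolding in_ideal_pk_phi_def by blast
qed

lemma in_ideal_pk_phi_mult_left:
  assumes "in_ideal_pk_phi p k \<phi> a g"
  shows "in_ideal_pk_phi p k \<phi> a (h * g)"
proof -
  from assms obtain u v where "g = smult (p ^ k) u + \<phi> ^ (a * k) * v"
    unfolding in_ideal_pk_phi_def by blast
  then have "h * g = smult (p ^ k) (h * u) + \<phi> ^ (a * k) * (h * v)"
    by (simp add: algebra_simps)
  then show ?thesis unfolding in_ideal_pk_phi_def by blast
qed

lemma in_ideal_pk_phi_sum:
  "(\<And>i. i \<in> A \<Longrightarrow> in_ideal_pk_phi p k \<phi> a (g i)) \<Longrightarrow> in_ideal_pk_phi p k \<phi> a (\<Sum>i\<in>A. g i)"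
  by (induction A rule: infinite_finite_induct) (simp_all add: in_ideal_pk_phi_zero in_ideal_pk_phi_add)

lemma smult_power_shift_diff:
  fixes c :: "'a::comm_ring_1"
  assumes "2 \<le> i" and "2 \<le> k"
  shows "\<exists>r. (smult c (y + smult (c ^ (k - 2)) w)) ^ i - (smult c y) ^ i = smult (c ^ k) r"
proof -
  define d where "d = smult (c ^ (k - 2)) w"
  obtain j where i: "i = 2 + j" using le_Suc_ex[OF \<open>2 \<le> i\<close>] by blast
  have "d dvd (y + d) ^ i - y ^ i"
    using power_diff_sumr2[of "y + d" i y] by simp
  then obtain q where q: "(y + d) ^ i - y ^ i = d * q" ..
  have "(smult c (y + d)) ^ i - (smult c y) ^ i = smult (c ^ i) (d * q)"
    by (simp add: smult_power q flip: smult_diff_right)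
  also have "\<dots> = smult (c ^ (2 + (k - 2))) (smult (c ^ j) (w * q))"
    by (simp add: d_def i power_add ac_simps)
  finally show ?thesis
    unfolding d_def le_add_diff_inverse[OF \<open>2 \<le> k\<close>] by blast
qed

lemma E_poly_summand_shift_in_ideal:
  fixes p :: int
  assumes f: "f = \<phi> ^ e + smult p l" and "2 * a \<le> e" and "2 \<le> k"
  shows "in_ideal_pk_phi p k \<phi> a
    (f * \<phi> ^ (a * (k - 1 - i)) * ((smult p (y + smult (p ^ (k - 2)) w)) ^ i - (smult p y) ^ i))"
proof -
  consider "i = 0" | "i = 1" | "2 \<le> i"
    by linarith
  then show ?thesis
  proof cases
    case 1
    then show ?thesis by (simp add: in_ideal_pk_phi_zero)
  next
    case 2
    have p_pow: "p * p ^ (k - 2) = p ^ (k - 1)" "p * p ^ (k - 1) = p ^ k"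
      using \<open>2 \<le> k\<close> by (simp_all flip: power_Suc add: Suc_diff_Suc numeral_2_eq_2)
    have phi_pow: "\<phi> ^ e * \<phi> ^ (a * (k - 2)) = \<phi> ^ (a * k) * \<phi> ^ (e - 2 * a)"
      using assms(2,3) by (simp flip: power_add) (simp add: algebra_simps diff_mult_distrib2)
    have "smult p (y + smult (p ^ (k - 2)) w) - smult p y = smult (p ^ (k - 1)) w"
      by (simp add: smult_add_right p_pow(1))
    then have "f * \<phi> ^ (a * (k - 1 - i)) * ((smult p (y + smult (p ^ (k - 2)) w)) ^ i - (smult p y) ^ i)
       = (\<phi> ^ e + smult p l) * \<phi> ^ (a * (k - 2)) * smult (p ^ (k - 1)) w"
      using 2 f by (simp add: numeral_2_eq_2)
    also have "\<dots> = (\<phi> ^ e * \<phi> ^ (a * (k - 2))) * smult (p ^ (k - 1)) w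
                    + smult (p * p ^ (k - 1)) (l * \<phi> ^ (a * (k - 2)) * w)"
      by (simp add: algebra_simps)
    also have "\<dots> = \<phi> ^ (a * k) * (\<phi> ^ (e - 2 * a) * smult (p ^ (k - 1)) w)
                    + smult (p ^ k) (l * \<phi> ^ (a * (k - 2)) * w)"
      by (simp only: phi_pow p_pow(2) mult.assoc)
    finally show ?thesis
      by (metis in_ideal_pk_phi_add in_ideal_pk_phi_phi_pow in_ideal_pk_phi_smult_pk)
  next
    case 3
    then obtain r where "(smult p (y + smult (p ^ (k - 2)) w)) ^ i - (smult p y) ^ i = smult (p ^ k) r"
      using smult_power_shift_diff \<open>2 \<le> k\<close> by blast
    then show ?thesis by (metis in_ideal_pk_phi_mult_left in_ideal_pk_phi_smult_pk)
  qed
qed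

lemma E_poly_shift_in_ideal:
  fixes p :: int
  assumes "f = \<phi> ^ e + smult p l" and "2 * a \<le> e" and "2 \<le> k"
  shows "in_ideal_pk_phi p k \<phi> a
    (E_poly p k \<phi> a f (y + smult (p ^ (k - 2)) w) - E_poly p k \<phi> a f y)"
proof -
  have E: "E_poly p k \<phi> a f u = (\<Sum>i<k. f * \<phi> ^ (a * (k - 1 - i)) * (smult p u) ^ i)" for u
    unfolding E_poly_def by (simp add: sum_distrib_left mult.assoc)
  have "E_poly p k \<phi> a f (y + smult (p ^ (k - 2)) w) - E_poly p k \<phi> a f y
     = (\<Sum>i<k. f * \<phi> ^ (a * (k - 1 - i))
          * ((smult p (y + smult (p ^ (k - 2)) w)) ^ i - (smult p y) ^ i))"
    by (simp only: E right_diff_distrib sum_subtractf)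
  then show ?thesis
    by (simp only:) (intro in_ideal_pk_phi_sum E_poly_summand_shift_in_ideal[OF assms])
qed

lemma is_root_R_shift:
  fixes p :: int
  assumes "f = \<phi> ^ e + smult p l" and "2 * a \<le> e" and "2 \<le> k"
    and "is_root_R p k \<phi> a f (y + smult (p ^ (k - 2)) w)"
  shows "is_root_R p k \<phi> a f (y + smult (p ^ (k - 2)) w')"
proof -
  have "in_ideal_pk_phi p k \<phi> a (E_poly p k \<phi> a f y)"
    using in_ideal_pk_phi_diff[OF assms(4)[unfolded is_root_R_def]
        E_poly_shift_in_ideal[OF assms(1-3), of y w]] by simp
  from in_ideal_pk_phi_add[OF this E_poly_shift_in_ideal[OF assms(1-3), of y w']]
  show ?thesis unfolding is_root_R_def by simp
qed

theorem lemma9: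
  fixes p :: int and k e a :: nat and \<phi> f l :: "int poly" and ys :: "nat \<Rightarrow> int poly"
  assumes "prime p" and "k \<ge> 2"
    and "monic \<phi>" and "poly_mod.irreducible_m p \<phi>"
    and "e \<ge> 1"
    and "poly_mod.Mp (p ^ k) f = poly_mod.Mp (p ^ k) (\<phi> ^ e + smult p l)"
    and "a > 0" and "2 * a \<le> e"
    and "is_root_R p k \<phi> a f (\<Sum>i<k. smult (p ^ i) (ys i))"
  shows "\<forall>z :: int poly. is_root_R p k \<phi> a f ((\<Sum>i<k - 2. smult (p ^ i) (ys i)) + smult (p ^ (k - 2)) z)"
proof
  fix z :: "int poly"
  obtain h where "f = \<phi> ^ e + smult p l + smult (p ^ k) h"
    using poly_mod.Mp_eq_imp_eq_add_smult[OF assms(6)] by blast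
  then have f: "f = \<phi> ^ e + smult p (l + smult (p ^ (k - 1)) h)"
    using \<open>k \<ge> 2\<close> by (simp add: smult_add_right power_eq_if)
  obtain n where k: "k = n + 2" using \<open>k \<ge> 2\<close> by (metis add.commute le_Suc_ex)
  have "(\<Sum>i<k. smult (p ^ i) (ys i))
      = (\<Sum>i<k - 2. smult (p ^ i) (ys i)) + smult (p ^ (k - 2)) (ys n + smult p (ys (Suc n)))"
    by (simp add: k numeral_2_eq_2 smult_add_right ac_simps)
  with assms(9) show "is_root_R p k \<phi> a f ((\<Sum>i<k - 2. smult (p ^ i) (ys i)) + smult (p ^ (k - 2)) z)"
    using is_root_R_shift[OF f \<open>2 * a \<le> e\<close> \<open>k \<ge> 2\<close>] by metis
qed

end
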